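(* Let $p\ge1$ and $s_1,\dots,s_p\in\mathbb{C}$. For all $m,l\in\mathbb{Z}_{\ge0}$, $(\Delta^l\mathtt{c}_{s_1,\dots,s_p})(m)=\mathtt{c}_{s_1,\dots,s_p;\,1-s_1,\dots,1-s_p}(m,l)$.
   Context: Convention $0^0=1$. $\mathtt{c}_{s_1,\dots,s_p}(m)=\sum_{m=m_1\ge\cdots\ge m_p\ge0}\frac{s_1^{m_1-m_2}\cdots s_{p-1}^{m_{p-1}-m_p}}{(m_1+1)\cdots(m_{p-1}+1)}s_p^{m_p}$. For $t_1,\dots,t_p\in\mathbb{C}$, $\mathtt{c}_{s_1,\dots,s_p;t_1,\dots,t_p}(m,l)=\binom{m+l}{m}^{-1}\sum_{m=m_1\ge\cdots\ge m_p\ge0,\ l=l_1\ge\cdots\ge l_p\ge0}\Bigl[\prod_{i=1}^{p-1}\binom{m_i-m_{i+1}+l_i-l_{i+1}}{m_i-m_{i+1}}\frac{s_i^{m_i-m_{i+1}}t_i^{l_i-l_{i+1}}}{m_i+l_i+1}\Bigr]\binom{m_p+l_p}{m_p}s_p^{m_p}t_p^{l_p}$. The difference operator is $(\Delta a)(m)=a(m)-a(m+1)$. *)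

theory Defs
  imports Complex_Main
begin

text \<open>Chains m = m_1 \<ge> m_2 \<ge> ... \<ge> m_p \<ge> 0, as lists of length p (0-based indices).\<close>
definition chains :: "nat \<Rightarrow> nat \<Rightarrow> nat list set" where
  "chains p m = {ms. length ms = p \<and> ms ! 0 = m \<and> sorted_wrt (\<ge>) ms}"

text \<open>c_{s_1,...,s_p}(m); s is the list [s_1,...,s_p]. Note 0^0 = 1 in Isabelle.\<close>
definition cfun :: "complex list \<Rightarrow> nat \<Rightarrow> complex" where
  "cfun s m = (let p = length s in
     \<Sum>ms\<in>chains p m.
       (\<Prod>i<p - 1. s ! i ^ (ms ! i - ms ! (i+1)) / of_nat (ms ! i + 1))
       * s ! (p - 1) ^ (ms ! (p - 1)))"

definition cfun2 :: "complex list \<Rightarrow> complex list \<Rightarrow> nat \<Rightarrow> nat \<Rightarrow> complex" where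
  "cfun2 s t m l = (let p = length s in
     inverse (of_nat ((m + l) choose m)) *
     (\<Sum>ms\<in>chains p m. \<Sum>ls\<in>chains p l.
       (\<Prod>i<p - 1.
          of_nat ((ms ! i - ms ! (i+1) + (ls ! i - ls ! (i+1))) choose (ms ! i - ms ! (i+1)))
          * s ! i ^ (ms ! i - ms ! (i+1)) * t ! i ^ (ls ! i - ls ! (i+1))
          / of_nat (ms ! i + ls ! i + 1))
       * of_nat ((ms ! (p - 1) + ls ! (p - 1)) choose (ms ! (p - 1)))
       * s ! (p - 1) ^ (ms ! (p - 1)) * t ! (p - 1) ^ (ls ! (p - 1))))"

definition Delta :: "(nat \<Rightarrow> complex) \<Rightarrow> nat \<Rightarrow> complex" where
  "Delta a m = a m - a (m + 1)"

end

theory Submission imports Defs begin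

text \<open>
  Write \<open>W(m,l) = (m+l choose m) c\<^bsub>s;t\<^esub>(m,l)\<close>. Splitting off the outermost pair of chain
  indices gives \<open>W\<^bsub>x#s;y#t\<^esub>(m,l) = (K \<star> W\<^bsub>s;t\<^esub>)(m,l) / (m+l+1)\<close>, where
  \<open>K(a,b) = (a+b choose a) x\<^sup>a y\<^sup>b\<close> and \<open>\<star>\<close> is the two-variable Cauchy product.
  When \<open>x + y = 1\<close> the kernel satisfies the weighted Pascal recurrence
  \<open>(a+1) f(a+1,b) + (b+1) f(a,b+1) = (a+b+1) f(a,b)\<close>, and the map
  \<open>f \<mapsto> (K \<star> f)(a,b) / (a+b+1)\<close> preserves it; so by induction on \<open>p\<close> it holds for \<open>W\<close>
  with \<open>t = 1 - s\<close>. Divided by the binomial coefficient it reads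
  \<open>c(m,l+1) = c(m,l) - c(m+1,l)\<close>, i.e. \<open>c(\<cdot>,l+1) = \<Delta> c(\<cdot>,l)\<close>, while \<open>c(m,0) = c\<^bsub>s\<^esub>(m)\<close>
  because for \<open>l = 0\<close> all chains in the second variable vanish.
\<close>

lemma sorted_wrt_ge_le_nth_0:
  fixes xs :: "'a::linorder list"
  shows "sorted_wrt (\<ge>) xs \<Longrightarrow> x \<in> set xs \<Longrightarrow> x \<le> xs ! 0"
  by (cases xs) auto

lemma chains_finite: "finite (chains p m)"
proof -
  have "chains p m \<subseteq> {xs. set xs \<subseteq> {..m} \<and> length xs = p}"
    unfolding chains_def by (auto dest: sorted_wrt_ge_le_nth_0)
  moreover have "finite {xs. set xs \<subseteq> {..m} \<and> length xs = p}"
    by (rule finite_lists_length_eq) simp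
  ultimately show ?thesis by (rule finite_subset)
qed

lemma chains_0:
  assumes "p \<ge> 1"
  shows "chains p 0 = {replicate p 0}"
proof -
  have "sorted_wrt (\<ge>) (replicate p (0::nat))" by (simp add: sorted_wrt_iff_nth_less)
  with assms show ?thesis
    unfolding chains_def by (auto dest: sorted_wrt_ge_le_nth_0 intro!: replicate_eqI)
qed

lemma chains_1: "chains 1 m = {[m]}"
  unfolding chains_def by (auto simp: length_Suc_conv)

lemma chains_Suc:
  assumes "p \<ge> 1"
  shows "chains (Suc p) m = (#) m ` (\<Union>j\<le>m. chains p j)"
proof
  show "chains (Suc p) m \<subseteq> (#) m ` (\<Union>j\<le>m. chains p j)"
  proof
    fix ms assume "ms \<in> chains (Suc p) m"
    then obtain ns where ms: "ms = m # ns" and "length ns = p" "sorted_wrt (\<ge>) (m # ns)"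
      unfolding chains_def by (cases ms) auto
    moreover from this have "ns \<noteq> []" using assms by auto
    ultimately have "ns ! 0 \<le> m" and "ns \<in> chains p (ns ! 0)"
      unfolding chains_def by (auto simp: neq_Nil_conv)
    then show "ms \<in> (#) m ` (\<Union>j\<le>m. chains p j)" using ms by blast
  qed
next
  show "(#) m ` (\<Union>j\<le>m. chains p j) \<subseteq> chains (Suc p) m"
  proof clarify
    fix j ns assume "j \<le> m" "ns \<in> chains p j"
    then have "length ns = p" "sorted_wrt (\<ge>) ns" "\<forall>x\<in>set ns. x \<le> m"
      unfolding chains_def by (auto dest: sorted_wrt_ge_le_nth_0)
    then show "m # ns \<in> chains (Suc p) m"
      unfolding chains_def by simp
  qed
qed

lemma sum_chains_Suc:
  assumes "p \<ge> 1"
  shows "(\<Sum>ms\<in>chains (Suc p) m. g ms) = (\<Sum>j\<le>m. \<Sum>ms\<in>chains p j. g (m # ms))"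
proof -
  have "(\<Sum>ms\<in>chains (Suc p) m. g ms) = (\<Sum>ms\<in>(\<Union>j\<le>m. chains p j). g (m # ms))"
    by (simp add: chains_Suc[OF assms] sum.reindex)
  also have "\<dots> = (\<Sum>j\<le>m. \<Sum>ms\<in>chains p j. g (m # ms))"
    by (rule sum.UNION_disjoint) (auto simp: chains_finite, auto simp: chains_def)
  finally show ?thesis .
qed

definition cauchy2 :: "(nat \<Rightarrow> nat \<Rightarrow> 'a::comm_semiring_1) \<Rightarrow> (nat \<Rightarrow> nat \<Rightarrow> 'a) \<Rightarrow> nat \<Rightarrow> nat \<Rightarrow> 'a" where
  "cauchy2 A B m l = (\<Sum>j\<le>m. \<Sum>k\<le>l. A (m - j) (l - k) * B j k)"

lemma cauchy2_add_left:
  "cauchy2 (\<lambda>a b. A1 a b + A2 a b) B m l = cauchy2 A1 B m l + cauchy2 A2 B m l"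
  by (simp add: cauchy2_def distrib_right sum.distrib)

lemma cauchy2_add_right:
  "cauchy2 A (\<lambda>a b. B1 a b + B2 a b) m l = cauchy2 A B1 m l + cauchy2 A B2 m l"
  by (simp add: cauchy2_def distrib_left sum.distrib)

lemma cauchy2_transpose: "cauchy2 A B m l = cauchy2 (\<lambda>a b. A b a) (\<lambda>j k. B k j) l m"
  unfolding cauchy2_def by (rule sum.swap)

text \<open>Splitting the weight \<open>m + 1 = (m + 1 - j) + j\<close>: the derivative rule for the Cauchy product.\<close>
lemma of_nat_Suc_mult_sum_antidiagonal:
  fixes P :: "nat \<Rightarrow> nat \<Rightarrow> 'a::comm_semiring_1"
  shows "of_nat (Suc m) * (\<Sum>j\<le>Suc m. P (Suc m - j) j) =
    (\<Sum>j\<le>m. of_nat (m - j + 1) * P (m - j + 1) j) + (\<Sum>j\<le>m. of_nat (j + 1) * P (m - j) (j + 1))"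
proof -
  have "of_nat (Suc m) * (\<Sum>j\<le>Suc m. P (Suc m - j) j) =
     (\<Sum>j\<le>Suc m. (of_nat (Suc m - j) + of_nat j) * P (Suc m - j) j)"
    unfolding sum_distrib_left by (intro sum.cong refl) (simp flip: of_nat_add)
  also have "\<dots> = (\<Sum>j\<le>Suc m. of_nat (Suc m - j) * P (Suc m - j) j)
      + (\<Sum>j\<le>Suc m. of_nat j * P (Suc m - j) j)"
    by (simp only: distrib_right sum.distrib)
  also have "(\<Sum>j\<le>Suc m. of_nat (Suc m - j) * P (Suc m - j) j) =
      (\<Sum>j\<le>m. of_nat (m - j + 1) * P (m - j + 1) j)"
    by (simp add: sum.atMost_Suc Suc_diff_le)
  also have "(\<Sum>j\<le>Suc m. of_nat j * P (Suc m - j) j) = (\<Sum>j\<le>m. of_nat (j + 1) * P (m - j) (j + 1))"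
    by (simp only: sum.atMost_Suc_shift) simp
  finally show ?thesis .
qed

lemma of_nat_Suc_mult_cauchy2_Suc_left:
  "of_nat (m + 1) * cauchy2 A B (Suc m) l =
     cauchy2 (\<lambda>a b. of_nat (a + 1) * A (a + 1) b) B m l
   + cauchy2 A (\<lambda>j k. of_nat (j + 1) * B (j + 1) k) m l"
proof -
  define P where "P a j = (\<Sum>k\<le>l. A a (l - k) * B j k)" for a j
  have "of_nat (m + 1) * cauchy2 A B (Suc m) l = of_nat (Suc m) * (\<Sum>j\<le>Suc m. P (Suc m - j) j)"
    by (simp add: cauchy2_def P_def)
  also have "\<dots> = cauchy2 (\<lambda>a b. of_nat (a + 1) * A (a + 1) b) B m l
      + cauchy2 A (\<lambda>j k. of_nat (j + 1) * B (j + 1) k) m l"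
    unfolding of_nat_Suc_mult_sum_antidiagonal
    by (simp add: cauchy2_def P_def sum_distrib_left mult.assoc mult.left_commute)
  finally show ?thesis .
qed

lemma of_nat_Suc_mult_cauchy2_Suc_right:
  "of_nat (l + 1) * cauchy2 A B m (Suc l) =
     cauchy2 (\<lambda>a b. of_nat (b + 1) * A a (b + 1)) B m l
   + cauchy2 A (\<lambda>j k. of_nat (k + 1) * B j (k + 1)) m l"
  by (simp only: cauchy2_transpose[of A B m] cauchy2_transpose[of _ _ l m]
      of_nat_Suc_mult_cauchy2_Suc_left)

definition weighted_pascal :: "(nat \<Rightarrow> nat \<Rightarrow> 'a::comm_semiring_1) \<Rightarrow> bool" where
  "weighted_pascal f \<longleftrightarrow>
     (\<forall>a b. of_nat (a + 1) * f (a + 1) b + of_nat (b + 1) * f a (b + 1) = of_nat (a + b + 1) * f a b)"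

definition binomial_monomial :: "'a::comm_semiring_1 \<Rightarrow> 'a \<Rightarrow> nat \<Rightarrow> nat \<Rightarrow> 'a" where
  "binomial_monomial x y a b = of_nat ((a + b) choose a) * x ^ a * y ^ b"

lemma Suc_times_binomial_Suc_left: "(a + 1) * ((a + 1 + b) choose (a + 1)) = (a + b + 1) * ((a + b) choose a)"
  using Suc_times_binomial_eq[of "a + b" a] by simp

lemma Suc_times_binomial_Suc_right: "(b + 1) * ((a + (b + 1)) choose a) = (a + b + 1) * ((a + b) choose a)"
  using Suc_times_binomial_Suc_left[of b a] by (simp add: add_ac binomial_symmetric[of a, simplified])

lemma weighted_pascal_binomial_monomial:
  assumes "x + y = 1"
  shows "weighted_pascal (binomial_monomial x y)"
  unfolding weighted_pascal_def
proof (intro allI)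
  fix a b
  have "of_nat (a + 1) * binomial_monomial x y (a + 1) b + of_nat (b + 1) * binomial_monomial x y a (b + 1)
      = of_nat ((a + 1) * ((a + 1 + b) choose (a + 1))) * x ^ (a + 1) * y ^ b
        + of_nat ((b + 1) * ((a + (b + 1)) choose a)) * x ^ a * y ^ (b + 1)"
    unfolding binomial_monomial_def by (simp only: of_nat_mult) (simp add: algebra_simps)
  also have "\<dots> = of_nat ((a + b + 1) * ((a + b) choose a)) * x ^ a * y ^ b * (x + y)"
    unfolding Suc_times_binomial_Suc_left Suc_times_binomial_Suc_right by (simp add: algebra_simps)
  also have "\<dots> = of_nat (a + b + 1) * binomial_monomial x y a b"
    unfolding assms binomial_monomial_def by (simp only: of_nat_mult mult_1_right mult.assoc)
  finally show "of_nat (a + 1) * binomial_monomial x y (a + 1) b + of_nat (b + 1) * binomial_monomial x y a (b + 1)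
      = of_nat (a + b + 1) * binomial_monomial x y a b" .
qed

lemma cauchy2_weighted_pascal:
  assumes "weighted_pascal A" "weighted_pascal B"
  shows "of_nat (m + 1) * cauchy2 A B (Suc m) l + of_nat (l + 1) * cauchy2 A B m (Suc l)
           = of_nat (m + l + 2) * cauchy2 A B m l"
proof -
  have "of_nat (m + 1) * cauchy2 A B (Suc m) l + of_nat (l + 1) * cauchy2 A B m (Suc l) =
      cauchy2 (\<lambda>a b. of_nat (a + 1) * A (a + 1) b + of_nat (b + 1) * A a (b + 1)) B m l
    + cauchy2 A (\<lambda>j k. of_nat (j + 1) * B (j + 1) k + of_nat (k + 1) * B j (k + 1)) m l"
    unfolding of_nat_Suc_mult_cauchy2_Suc_left of_nat_Suc_mult_cauchy2_Suc_right
      cauchy2_add_left cauchy2_add_right by (simp only: add_ac)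
  also have "\<dots> = cauchy2 (\<lambda>a b. of_nat (a + b + 1) * A a b) B m l
      + cauchy2 A (\<lambda>j k. of_nat (j + k + 1) * B j k) m l"
    using assms by (simp only: weighted_pascal_def)
  also have "\<dots> = of_nat (m + l + 2) * cauchy2 A B m l"
    unfolding cauchy2_def sum_distrib_left sum.distrib[symmetric]
  proof (intro sum.cong refl)
    fix j k assume "j \<in> {..m}" "k \<in> {..l}"
    then have "m - j + (l - k) + 1 + (j + k + 1) = m + l + 2" by simp
    then have "(of_nat (m - j + (l - k) + 1) :: 'a) + of_nat (j + k + 1) = of_nat (m + l + 2)"
      by (metis of_nat_add)
    then show "of_nat (m - j + (l - k) + 1) * A (m - j) (l - k) * B j k
        + A (m - j) (l - k) * (of_nat (j + k + 1) * B j k)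
        = of_nat (m + l + 2) * (A (m - j) (l - k) * B j k)"
      by (simp only: mult.assoc mult.left_commute[of _ "A (m - j) (l - k)"]
          distrib_left[symmetric] distrib_right[symmetric])
  qed
  finally show ?thesis .
qed

lemma weighted_pascal_cauchy2:
  fixes A B :: "nat \<Rightarrow> nat \<Rightarrow> 'a::field_char_0"
  assumes "weighted_pascal A" "weighted_pascal B"
  shows "weighted_pascal (\<lambda>a b. cauchy2 A B a b / of_nat (a + b + 1))"
  unfolding weighted_pascal_def
proof (intro allI)
  fix m l
  let ?H = "cauchy2 A B"
  have nz2: "(of_nat (m + l + 2) :: 'a) \<noteq> 0" and nz1: "(of_nat (m + l + 1) :: 'a) \<noteq> 0"
    by (simp_all only: of_nat_eq_0_iff)
  have "of_nat (m + 1) * (?H (m + 1) l / of_nat (m + 1 + l + 1))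
        + of_nat (l + 1) * (?H m (l + 1) / of_nat (m + (l + 1) + 1))
      = (of_nat (m + 1) * ?H (Suc m) l + of_nat (l + 1) * ?H m (Suc l)) / of_nat (m + l + 2)"
    by (simp add: add_divide_distrib add_ac)
  also have "\<dots> = ?H m l"
    unfolding cauchy2_weighted_pascal[OF assms] by (rule nonzero_mult_div_cancel_left[OF nz2])
  also have "\<dots> = of_nat (m + l + 1) * (?H m l / of_nat (m + l + 1))"
    by (simp only: times_divide_eq_right nonzero_mult_div_cancel_left[OF nz1])
  finally show "of_nat (m + 1) * (?H (m + 1) l / of_nat (m + 1 + l + 1))
        + of_nat (l + 1) * (?H m (l + 1) / of_nat (m + (l + 1) + 1))
      = of_nat (m + l + 1) * (?H m l / of_nat (m + l + 1))" .
qed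

lemma weighted_pascal_binomial_times:
  fixes g :: "nat \<Rightarrow> nat \<Rightarrow> 'a::field_char_0"
  assumes "weighted_pascal (\<lambda>a b. of_nat ((a + b) choose a) * g a b)"
  shows "g (a + 1) b + g a (b + 1) = g a b"
proof -
  let ?c = "of_nat (a + b + 1) * of_nat ((a + b) choose a) :: 'a"
  have "of_nat (a + 1) * (of_nat ((a + 1 + b) choose (a + 1)) * g (a + 1) b)
      + of_nat (b + 1) * (of_nat ((a + (b + 1)) choose a) * g a (b + 1))
      = of_nat (a + b + 1) * (of_nat ((a + b) choose a) * g a b)"
    using assms unfolding weighted_pascal_def by blast
  then have "?c * (g (a + 1) b + g a (b + 1)) = ?c * g a b"
    unfolding mult.assoc[symmetric] of_nat_mult[symmetric]
      Suc_times_binomial_Suc_left Suc_times_binomial_Suc_right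
    by (simp only: distrib_left mult.assoc)
  moreover have "?c \<noteq> 0" by (simp only: of_nat_eq_0_iff mult_eq_0_iff) simp
  ultimately show ?thesis by simp
qed

definition cfun2_summand :: "complex list \<Rightarrow> complex list \<Rightarrow> nat list \<Rightarrow> nat list \<Rightarrow> complex" where
  "cfun2_summand s t ms ls = (let p = length s in
     (\<Prod>i<p - 1.
        of_nat ((ms ! i - ms ! (i+1) + (ls ! i - ls ! (i+1))) choose (ms ! i - ms ! (i+1)))
        * s ! i ^ (ms ! i - ms ! (i+1)) * t ! i ^ (ls ! i - ls ! (i+1))
        / of_nat (ms ! i + ls ! i + 1))
     * of_nat ((ms ! (p - 1) + ls ! (p - 1)) choose (ms ! (p - 1)))
     * s ! (p - 1) ^ (ms ! (p - 1)) * t ! (p - 1) ^ (ls ! (p - 1)))"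

definition cfun2_unnorm :: "complex list \<Rightarrow> complex list \<Rightarrow> nat \<Rightarrow> nat \<Rightarrow> complex" where
  "cfun2_unnorm s t m l =
     (\<Sum>ms\<in>chains (length s) m. \<Sum>ls\<in>chains (length s) l. cfun2_summand s t ms ls)"

lemma cfun2_unnorm_eq: "cfun2_unnorm s t m l = of_nat ((m + l) choose m) * cfun2 s t m l"
  by (simp add: cfun2_unnorm_def cfun2_def cfun2_summand_def Let_def)

lemma cfun2_unnorm_singleton: "cfun2_unnorm [x] [y] m l = binomial_monomial x y m l"
  by (simp add: cfun2_unnorm_def cfun2_summand_def binomial_monomial_def chains_1[simplified])

lemma cfun2_summand_Cons:
  assumes "length s = Suc q" "ms \<in> chains (Suc q) j" "ls \<in> chains (Suc q) k"
  shows "cfun2_summand (x # s) (y # t) (m # ms) (l # ls)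
           = binomial_monomial x y (m - j) (l - k) / of_nat (m + l + 1) * cfun2_summand s t ms ls"
proof -
  have "ms ! 0 = j" "ls ! 0 = k" using assms by (auto simp: chains_def)
  then show ?thesis using assms(1) unfolding cfun2_summand_def Let_def
    by (simp only: prod.lessThan_Suc_shift length_Cons diff_Suc_1)
       (simp add: binomial_monomial_def field_simps)
qed

lemma cfun2_unnorm_Cons:
  assumes "s \<noteq> []"
  shows "cfun2_unnorm (x # s) (y # t) m l
           = cauchy2 (binomial_monomial x y) (cfun2_unnorm s t) m l / of_nat (m + l + 1)"
proof -
  obtain q where q: "length s = Suc q" using assms by (cases s) auto
  have "cfun2_unnorm (x # s) (y # t) m l = (\<Sum>j\<le>m. \<Sum>ms\<in>chains (Suc q) j. \<Sum>k\<le>l. \<Sum>ls\<in>chains (Suc q) k.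
           cfun2_summand (x # s) (y # t) (m # ms) (l # ls))"
    unfolding cfun2_unnorm_def using q by (simp add: sum_chains_Suc)
  also have "\<dots> = (\<Sum>j\<le>m. \<Sum>k\<le>l. \<Sum>ms\<in>chains (Suc q) j. \<Sum>ls\<in>chains (Suc q) k.
           binomial_monomial x y (m - j) (l - k) / of_nat (m + l + 1) * cfun2_summand s t ms ls)"
    by (subst sum.swap) (intro sum.cong refl cfun2_summand_Cons[OF q] | assumption)+
  also have "\<dots> = cauchy2 (binomial_monomial x y) (cfun2_unnorm s t) m l / of_nat (m + l + 1)"
    unfolding cfun2_unnorm_def cauchy2_def q
    by (simp add: sum_distrib_left sum_divide_distrib)
  finally show ?thesis .
qed

lemma weighted_pascal_cfun2_unnorm:
  assumes "s \<noteq> []"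
  shows "weighted_pascal (cfun2_unnorm s (map (\<lambda>x. 1 - x) s))"
  using assms
proof (induction s)
  case Nil
  then show ?case by simp
next
  case (Cons x s)
  have monomial: "weighted_pascal (binomial_monomial x (1 - x))"
    by (rule weighted_pascal_binomial_monomial) simp
  show ?case
  proof (cases "s = []")
    case True
    with monomial show ?thesis by (simp add: cfun2_unnorm_singleton)
  next
    case False
    with weighted_pascal_cauchy2[OF monomial Cons.IH[OF False]] show ?thesis
      by (simp add: cfun2_unnorm_Cons)
  qed
qed

lemma cfun2_0: "s \<noteq> [] \<Longrightarrow> cfun2 s t m 0 = cfun s m"
  by (simp add: cfun2_def cfun_def chains_0 Suc_le_eq)

lemma cfun2_Suc_right:
  assumes "s \<noteq> []"
  shows "cfun2 s (map (\<lambda>x. 1 - x) s) m (Suc l)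
           = cfun2 s (map (\<lambda>x. 1 - x) s) m l - cfun2 s (map (\<lambda>x. 1 - x) s) (Suc m) l"
  using weighted_pascal_binomial_times[of "cfun2 s (map (\<lambda>x. 1 - x) s)" m l]
    weighted_pascal_cfun2_unnorm[OF assms]
  by (simp add: cfun2_unnorm_eq[abs_def] algebra_simps)

theorem proposition3p2:
  fixes s :: "complex list" and m l :: nat
  assumes "length s \<ge> 1"
  shows "(Delta ^^ l) (cfun s) m = cfun2 s (map (\<lambda>x. 1 - x) s) m l"
proof -
  have "s \<noteq> []" using assms by auto
  then show ?thesis
  proof (induction l arbitrary: m)
    case 0
    then show ?case by (simp add: cfun2_0)
  next
    case (Suc l)
    then show ?case by (simp add: Delta_def cfun2_Suc_right)
  qed
qed

end
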